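(* Let $\alpha\in(0,2)$, $d\in\mathbb{N}$, $r>-\alpha$, $p\in((-r)\vee0,\alpha)$, $V_p(x):=(1+|x|^2)^{p/2}$ and $$q:=\frac{2^{4+2\alpha}\pi^{d/2}\Gamma(\frac{d+\alpha}{2})}{\Gamma(\frac d2)^2\Gamma(\frac{2-\alpha}{2})}\Big(\frac{\alpha}{2-\alpha}+\frac{\alpha}{(\alpha-p)p}\Big).$$ Let $b:\mathbb{R}^d\to\mathbb{R}^d$ and $\sigma:\mathbb{R}^d\to\mathbb{R}^d\otimes\mathbb{R}^d$ be locally bounded, and suppose that for some $c_0,c_1>0$, $$q\|\sigma(x)\|^\alpha|x|^{2-\alpha}+\langle x,b(x)\rangle\leq -c_0|x|^{2+r}+c_1,\qquad |x|>1.$$ Then there are $\kappa_0,\kappa_1>0$ such that for all $x\in\mathbb{R}^d$, $$\mathscr{L}V_p(x):=\mathcal{L}_\sigma V_p(x)+\langle b(x),\nabla V_p(x)\rangle\leq-\kappa_0V_p(x)^{1+\frac rp}+\kappa_1.$$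
   Context: For suitable $f$, $$\mathcal{L}_\sigma f(x)=\frac{\alpha2^\alpha\Gamma(\frac{d+\alpha}2)}{\Gamma(\frac d2)\Gamma(\frac{2-\alpha}2)}\int_{\mathbb{R}^d}\big[f(x+\sigma(x)z)+f(x-\sigma(x)z)-2f(x)\big]\frac{\mathrm{d}z}{|z|^{d+\alpha}}.$$ *)

theory Defs
  imports "HOL-Analysis.Analysis"
begin

definition Vp :: "real \<Rightarrow> real ^ 'n \<Rightarrow> real" where
  "Vp p x = (1 + (norm x)\<^sup>2) powr (p / 2)"

definition stable_const :: "real \<Rightarrow> nat \<Rightarrow> real" where
  "stable_const \<alpha> d = \<alpha> * 2 powr \<alpha> * Gamma ((real d + \<alpha>) / 2)
      / (Gamma (real d / 2) * Gamma ((2 - \<alpha>) / 2))"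

definition L_sigma :: "real \<Rightarrow> (real ^ 'n \<Rightarrow> real ^ 'n ^ 'n) \<Rightarrow> (real ^ 'n \<Rightarrow> real)
    \<Rightarrow> real ^ 'n \<Rightarrow> real" where
  "L_sigma \<alpha> \<sigma> f x = stable_const \<alpha> CARD('n) *
     (\<integral>z. (f (x + \<sigma> x *v z) + f (x - \<sigma> x *v z) - 2 * f x) / norm z powr (real CARD('n) + \<alpha>) \<partial>lborel)"

definition gen_L :: "real \<Rightarrow> (real ^ 'n \<Rightarrow> real ^ 'n ^ 'n) \<Rightarrow> (real ^ 'n \<Rightarrow> real ^ 'n)
    \<Rightarrow> (real ^ 'n \<Rightarrow> real) \<Rightarrow> real ^ 'n \<Rightarrow> real" where
  "gen_L \<alpha> \<sigma> b f x = L_sigma \<alpha> \<sigma> f x + frechet_derivative f (at x) (b x)"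

definition locally_bounded :: "('a::real_normed_vector \<Rightarrow> 'b::real_normed_vector) \<Rightarrow> bool" where
  "locally_bounded f \<longleftrightarrow> (\<forall>K. compact K \<longrightarrow> bounded (f ` K))"

definition q_const :: "real \<Rightarrow> nat \<Rightarrow> real \<Rightarrow> real" where
  "q_const \<alpha> d p = 2 powr (4 + 2 * \<alpha>) * pi powr (real d / 2) * Gamma ((real d + \<alpha>) / 2)
      / ((Gamma (real d / 2))\<^sup>2 * Gamma ((2 - \<alpha>) / 2))
      * (\<alpha> / (2 - \<alpha>) + \<alpha> / ((\<alpha> - p) * p))"

end

theory Submission
  imports Defs
begin

(* With t = 1 + |x|^2 we have V_p(x) = t^(p/2), a concave function of t. Hence the second
   difference V_p(x+w) + V_p(x-w) - 2 V_p(x) is at most p t^(p/2-1) |w|^2, and for |w| >= sqrt t it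
   is also at most 2^(p+1) |w|^p. Splitting the Levy integral at |z| = sqrt t / ||sigma(x)|| and
   integrating both bounds in polar coordinates gives
     L_sigma V_p(x) <= A ||sigma(x)||^alpha t^((p-alpha)/2),   with A 2^((2-alpha)/2) <= p q.
   As grad V_p(x) = p t^(p/2-1) x, for |x| > 1 the hypothesis on sigma and b lets the drift absorb
   this jump term, leaving -p c0 t^(p/2-1) |x|^(2+r) + p c1 <= -kappa0 V_p(x)^(1+r/p) + p c1.
   On the unit ball the generator is bounded because b and sigma are locally bounded. *)

definition unit_sphere_area :: "real \<Rightarrow> real" where
  "unit_sphere_area n = n * unit_ball_vol n"

lemma unit_sphere_area_nonneg: "0 \<le> n \<Longrightarrow> 0 \<le> unit_sphere_area n"
  by (simp add: unit_sphere_area_def)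

lemma distr_norm_lborel:
  "distr (lborel :: 'a::euclidean_space measure) borel norm =
     density lborel (\<lambda>u. ennreal (unit_sphere_area DIM('a) * u powr (real DIM('a) - 1)) * indicator {0..} u)"
  (is "_ = density lborel ?f")
proof (rule measure_eqI_generator_eq_countable[where E = "range lessThan" and \<Omega> = UNIV
      and A = "range (\<lambda>n::nat. {..<real n})"])
  show "Int_stable (range lessThan :: real set set)"
  proof (clarsimp simp: Int_stable_def)
    fix a b :: real
    have "{..<a} \<inter> {..<b} = {..<min a b}"
      by auto
    then show "{..<a} \<inter> {..<b} \<in> range lessThan"
      by blast
  qed
  have cdf: "emeasure (distr (lborel :: 'a measure) borel norm) {..<x} =
      ennreal (if x \<le> 0 then 0 else unit_ball_vol DIM('a) * x ^ DIM('a))" for x :: real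
  proof -
    have ball: "norm -` {..<x} = (ball 0 x :: 'a set)"
      by auto
    show ?thesis
      by (subst emeasure_distr) (auto simp: ball emeasure_ball ball_empty)
  qed
  show "emeasure (distr (lborel :: 'a measure) borel norm) X = emeasure (density lborel ?f) X"
    if "X \<in> range lessThan" for X
  proof -
    from that obtain x where X: "X = {..<x}"
      by auto
    have "emeasure (density lborel ?f) {..<x} = (\<integral>\<^sup>+ u. ?f u * indicator {..<x} u \<partial>lborel)"
      by (subst emeasure_density) auto
    also have "\<dots> = (\<integral>\<^sup>+ u. ennreal (indicator {0..max 0 x} u
        * (unit_sphere_area DIM('a) * u powr (real DIM('a) - 1))) \<partial>lborel)"
      by (intro nn_integral_cong_AE eventually_mono[OF eventually_conj[OF AE_lborel_singleton[of x]
            AE_lborel_singleton[of 0]]])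
         (auto split: split_indicator)
    also have "\<dots> = ennreal (unit_sphere_area DIM('a) * (max 0 x powr (real DIM('a) - 1 + 1) / (real DIM('a) - 1 + 1)))"
      by (intro nn_integral_has_integral_lebesgue has_integral_mult_right has_integral_powr_from_0)
         (auto simp: unit_sphere_area_def)
    finally show ?thesis
      by (simp add: X cdf unit_sphere_area_def powr_realpow DIM_positive)
  qed
  show "emeasure (distr (lborel :: 'a measure) borel norm) X \<noteq> \<infinity>"
    if "X \<in> range (\<lambda>n::nat. {..<real n})" for X
    using that by (auto simp: cdf)
qed (auto simp: borel_Iio intro: reals_Archimedean2)

lemma nn_integral_radial:
  fixes h :: "real \<Rightarrow> ennreal"
  assumes "h \<in> borel_measurable borel"
  shows "(\<integral>\<^sup>+ z. h (norm z) \<partial>(lborel :: 'a::euclidean_space measure)) =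
    (\<integral>\<^sup>+ u. ennreal (unit_sphere_area DIM('a) * u powr (real DIM('a) - 1)) * indicator {0..} u * h u
      \<partial>lborel)"
  (is "_ = ?rhs")
proof -
  have "(\<integral>\<^sup>+ z. h (norm z) \<partial>(lborel :: 'a measure))
      = integral\<^sup>N (distr (lborel :: 'a measure) borel norm) h"
    using assms by (subst nn_integral_distr) auto
  also have "\<dots> = integral\<^sup>N (density lborel
      (\<lambda>u. ennreal (unit_sphere_area DIM('a) * u powr (real DIM('a) - 1)) * indicator {0..} u)) h"
    by (simp add: distr_norm_lborel)
  also have "\<dots> = ?rhs"
    using assms by (simp add: nn_integral_density)
  finally show ?thesis .
qed

lemma nn_integral_norm_powr_inside_ball:
  fixes a \<rho> :: real
  assumes "0 < a" "0 \<le> \<rho>"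
  shows "(\<integral>\<^sup>+ z. ennreal (indicator {..\<rho>} (norm z) * norm z powr (a - DIM('a)))
           \<partial>(lborel :: 'a::euclidean_space measure))
       = ennreal (unit_sphere_area DIM('a) * \<rho> powr a / a)"
proof -
  let ?c = "unit_sphere_area DIM('a)"
  have "(\<integral>\<^sup>+ z. ennreal (indicator {..\<rho>} (norm z) * norm z powr (a - DIM('a))) \<partial>(lborel :: 'a measure))
      = (\<integral>\<^sup>+ u. ennreal (?c * u powr (real DIM('a) - 1)) * indicator {0..} u
             * ennreal (indicator {..\<rho>} u * u powr (a - DIM('a))) \<partial>lborel)"
    by (rule nn_integral_radial) measurable
  also have "\<dots> = (\<integral>\<^sup>+ u. ennreal (indicator {0..\<rho>} u * (?c * u powr (a - 1))) \<partial>lborel)"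
  proof (intro nn_integral_cong)
    fix u :: real
    have "u powr (real DIM('a) - 1) * u powr (a - DIM('a)) = u powr (a - 1)" if "u > 0"
      using that by (simp add: powr_add[symmetric])
    then show "ennreal (?c * u powr (real DIM('a) - 1)) * indicator {0..} u
             * ennreal (indicator {..\<rho>} u * u powr (a - DIM('a)))
        = ennreal (indicator {0..\<rho>} u * (?c * u powr (a - 1)))"
      by (cases "u > 0"; cases "u = 0")
         (auto split: split_indicator simp: ennreal_mult'[symmetric] mult_ac unit_sphere_area_def)
  qed
  also have "\<dots> = ennreal (?c * (\<rho> powr (a - 1 + 1) / (a - 1 + 1)))"
    using assms by (intro nn_integral_has_integral_lebesgue has_integral_mult_right has_integral_powr_from_0)
       (auto simp: unit_sphere_area_def)
  finally show ?thesis
    by simp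
qed

lemma nn_integral_norm_powr_outside_ball:
  fixes a \<rho> :: real
  assumes "0 < a" "0 < \<rho>"
  shows "(\<integral>\<^sup>+ z. ennreal (indicator {\<rho>..} (norm z) * norm z powr (- a - DIM('a)))
           \<partial>(lborel :: 'a::euclidean_space measure))
       = ennreal (unit_sphere_area DIM('a) * \<rho> powr (- a) / a)"
proof -
  let ?c = "unit_sphere_area DIM('a)"
  have "(\<integral>\<^sup>+ z. ennreal (indicator {\<rho>..} (norm z) * norm z powr (- a - DIM('a))) \<partial>(lborel :: 'a measure))
      = (\<integral>\<^sup>+ u. ennreal (?c * u powr (real DIM('a) - 1)) * indicator {0..} u
             * ennreal (indicator {\<rho>..} u * u powr (- a - DIM('a))) \<partial>lborel)"
    by (rule nn_integral_radial) measurable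
  also have "\<dots> = (\<integral>\<^sup>+ u. ennreal (indicator {\<rho>..} u * (?c * u powr (- a - 1))) \<partial>lborel)"
  proof (intro nn_integral_cong)
    fix u :: real
    have "real DIM('a) - 1 + (- a - DIM('a)) = - a - 1"
      by simp
    then have "u powr (real DIM('a) - 1) * u powr (- a - DIM('a)) = u powr (- a - 1)"
      by (simp only: powr_add[symmetric])
    then show "ennreal (?c * u powr (real DIM('a) - 1)) * indicator {0..} u
             * ennreal (indicator {\<rho>..} u * u powr (- a - DIM('a)))
        = ennreal (indicator {\<rho>..} u * (?c * u powr (- a - 1)))"
      using assms by (cases "\<rho> \<le> u") (auto split: split_indicator simp: ennreal_mult'[symmetric] mult_ac)
  qed
  also have "\<dots> = ennreal (?c * (- (\<rho> powr (- a - 1 + 1)) / (- a - 1 + 1)))"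
    using assms by (intro nn_integral_has_integral_lebesgue has_integral_mult_right has_integral_powr_to_inf)
       (auto simp: unit_sphere_area_def)
  finally show ?thesis
    by simp
qed

lemma powr_le_tangent_line:
  fixes a u v :: real
  assumes "0 \<le> a" "a \<le> 1" "0 < u" "0 < v"
  shows "v powr a \<le> u powr a + a * u powr (a - 1) * (v - u)"
proof -
  have "(v / u) powr a * 1 powr (1 - a) \<le> a * (v / u) + (1 - a) * 1"
    using assms by (intro Youngs_inequality_0) auto
  then have "u powr a * (v / u) powr a \<le> u powr a * (a * (v / u) + (1 - a))"
    by (intro mult_left_mono) auto
  also have "u powr a * (v / u) powr a = v powr a"
    using assms by (simp add: powr_divide)
  also have "u powr a * (a * (v / u) + (1 - a)) = u powr a + a * u powr (a - 1) * (v - u)"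
    using assms by (simp add: powr_diff field_simps)
  finally show ?thesis .
qed

lemma one_plus_norm_square_neq_0: "1 + (norm x)\<^sup>2 \<noteq> 0"
  using zero_le_power2[of "norm x"] by linarith

lemma Vp_pos: "0 < Vp p x"
  using one_plus_norm_square_neq_0[of x] by (simp add: Vp_def)

lemma Vp_2: "Vp 2 x = 1 + (norm x)\<^sup>2"
  using one_plus_norm_square_neq_0[of x] by (simp add: Vp_def add_pos_nonneg)

lemma Vp_0: "Vp 0 x = 1"
  using one_plus_norm_square_neq_0[of x] by (simp add: Vp_def)

lemma Vp_add: "Vp (a + b) x = Vp a x * Vp b x"
  by (simp add: Vp_def add_divide_distrib powr_add)

lemma Vp_powr: "Vp a x powr e = Vp (a * e) x"
  by (simp add: Vp_def powr_powr)

lemma Vp_mono_exponent: "a \<le> b \<Longrightarrow> Vp a x \<le> Vp b x"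
  unfolding Vp_def by (intro powr_mono) auto

lemma Vp_le_1: "a \<le> 0 \<Longrightarrow> Vp a x \<le> 1"
  using Vp_mono_exponent[of a 0 x] by (simp add: Vp_0)

lemma Vp_le_on_unit_ball:
  assumes "norm x \<le> 1" "0 \<le> a"
  shows "Vp a x \<le> 2 powr (a / 2)"
  unfolding Vp_def using assms by (intro powr_mono2) (auto simp: abs_square_le_1)

lemma Vp_le_norm_powr:
  assumes "1 \<le> norm x" "0 \<le> a"
  shows "Vp a x \<le> 2 powr (a / 2) * norm x powr a"
proof -
  have "1 + (norm x)\<^sup>2 \<le> 2 * (norm x)\<^sup>2"
    using assms power_mono[of 1 "norm x" 2] by simp
  then have "Vp a x \<le> (2 * (norm x)\<^sup>2) powr (a / 2)"
    unfolding Vp_def using assms by (intro powr_mono2) auto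
  also have "\<dots> = 2 powr (a / 2) * ((norm x)\<^sup>2) powr (a / 2)"
    by (simp add: powr_mult)
  also have "((norm x)\<^sup>2) powr (a / 2) = norm x powr a"
    using assms by (simp add: powr_powr flip: powr_numeral)
  finally show ?thesis .
qed

lemma Vp_has_derivative:
  "(Vp p has_derivative (\<lambda>h. p * Vp (p - 2) x * (x \<bullet> h))) (at x)"
proof -
  have Vp_inner: "Vp p = (\<lambda>y. (1 + y \<bullet> y) powr (p / 2))"
    by (simp add: fun_eq_iff Vp_def power2_norm_eq_inner)
  have pos: "0 < 1 + x \<bullet> x"
    by (simp add: add_pos_nonneg)
  have Vp_p: "(1 + x \<bullet> x) powr (p / 2) = (1 + x \<bullet> x) * Vp (p - 2) x"
    using Vp_add[of 2 "p - 2" x] by (simp add: Vp_2 Vp_def[of p] power2_norm_eq_inner)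
  have chain_rule: "(1 + x \<bullet> x) powr (p / 2) * ((x \<bullet> h + h \<bullet> x) * (p / 2) / (1 + x \<bullet> x))
      = p * Vp (p - 2) x * (x \<bullet> h)" for h
    using pos by (simp add: Vp_p inner_commute[of h x] field_simps)
  show ?thesis
    unfolding Vp_inner by (rule derivative_eq_intros refl pos)+
      (simp_all only: fun_eq_iff mult_zero_left add_0_left chain_rule UNIV_I simp_thms)
qed

text \<open>Concavity of \<open>t \<mapsto> t powr (p/2)\<close> bounds each of \<open>Vp p (x \<plusminus> w)\<close> by the tangent at
  \<open>1 + \<bar>x\<bar>\<^sup>2\<close>; the first-order terms cancel.\<close>
lemma Vp_second_difference_le_quadratic:
  assumes "0 \<le> p" "p \<le> 2"
  shows "Vp p (x + w) + Vp p (x - w) - 2 * Vp p x \<le> p * Vp (p - 2) x * (norm w)\<^sup>2"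
proof -
  define t where "t = 1 + (norm x)\<^sup>2"
  have t: "0 < t"
    by (simp add: t_def add_pos_nonneg)
  have tangent: "Vp p y \<le> t powr (p / 2) + p / 2 * t powr (p / 2 - 1) * (1 + (norm y)\<^sup>2 - t)" for y
    unfolding Vp_def using assms t by (intro powr_le_tangent_line) (auto simp: add_pos_nonneg)
  have Vp_t: "Vp p x = t powr (p / 2)" "Vp (p - 2) x = t powr (p / 2 - 1)"
    by (simp_all add: Vp_def t_def diff_divide_distrib)
  have "Vp p (x + w) + Vp p (x - w) \<le> 2 * t powr (p / 2)
      + p / 2 * t powr (p / 2 - 1) * ((1 + (norm (x + w))\<^sup>2 - t) + (1 + (norm (x - w))\<^sup>2 - t))"
    using tangent[of "x + w"] tangent[of "x - w"] unfolding distrib_left by linarith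
  also have "(1 + (norm (x + w))\<^sup>2 - t) + (1 + (norm (x - w))\<^sup>2 - t) = 2 * (norm w)\<^sup>2"
    by (simp add: t_def power2_norm_eq_inner inner_add inner_diff inner_commute)
  finally show ?thesis
    by (simp add: Vp_t)
qed

lemma Vp_second_difference_le_large:
  assumes "0 \<le> p" "norm w \<le> m" "Vp 1 x \<le> m"
  shows "Vp p (x + w) + Vp p (x - w) - 2 * Vp p x \<le> 2 powr (p + 1) * m powr p"
proof -
  have m: "0 < m"
    using assms(3) Vp_pos[of 1 x] by linarith
  have "Vp 1 x * Vp 1 x = 1 + (norm x)\<^sup>2"
    by (simp add: Vp_add[symmetric] Vp_2)
  then have "1 + (norm x)\<^sup>2 \<le> m\<^sup>2"
    using assms(3) Vp_pos[of 1 x] mult_mono[of "Vp 1 x" m "Vp 1 x" m] by (simp add: power2_eq_square)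
  then have bound: "Vp p y \<le> (2 * m) powr p" if "norm y \<le> norm x + m" for y
  proof -
    have "(norm y)\<^sup>2 \<le> (norm x + m)\<^sup>2"
      using that by (intro power_mono) auto
    also have "\<dots> \<le> 2 * (norm x)\<^sup>2 + 2 * m\<^sup>2"
      using zero_le_power2[of "norm x - m"] unfolding power2_sum power2_diff by linarith
    finally have "1 + (norm y)\<^sup>2 \<le> (2 * m) powr 2"
      using \<open>1 + (norm x)\<^sup>2 \<le> m\<^sup>2\<close> m by (simp add: powr_numeral power_mult_distrib)
    then have "Vp p y \<le> ((2 * m) powr 2) powr (p / 2)"
      unfolding Vp_def using assms by (intro powr_mono2) (auto simp: add_pos_nonneg)
    then show ?thesis
      by (simp add: powr_powr)
  qed
  have "Vp p (x + w) \<le> (2 * m) powr p" "Vp p (x - w) \<le> (2 * m) powr p"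
    using assms norm_triangle_ineq[of x w] norm_triangle_ineq4[of x w] by (auto intro!: bound)
  then show ?thesis
    using Vp_pos[of p x] m by (simp add: powr_mult powr_add)
qed

lemma Vp_second_difference_quotient_le:
  fixes x w z :: "real^'n" and d \<alpha> s :: real
  assumes "0 < p" "p \<le> 2" "0 < s" "norm w \<le> s * norm z"
  defines "\<rho> \<equiv> Vp 1 x / s"
  shows "(Vp p (x + w) + Vp p (x - w) - 2 * Vp p x) / norm z powr (d + \<alpha>)
    \<le> p * Vp (p - 2) x * s\<^sup>2 * (indicator {..\<rho>} (norm z) * norm z powr ((2 - \<alpha>) - d))
      + 2 powr (p + 1) * s powr p * (indicator {\<rho>..} (norm z) * norm z powr (- (\<alpha> - p) - d))"
    (is "?\<Delta> / _ \<le> ?C1 * ?G1 + ?C2 * ?G2")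
proof -
  have G_nonneg: "0 \<le> ?C1 * ?G1" "0 \<le> ?C2 * ?G2"
    using assms Vp_pos[of "p - 2" x] by auto
  show ?thesis
  proof (cases "z = 0")
    case True
    then show ?thesis
      using G_nonneg by simp
  next
    case False
    then have z: "0 < norm z"
      by simp
    show ?thesis
    proof (cases "norm z \<le> \<rho>")
      case True
      have "?\<Delta> \<le> p * Vp (p - 2) x * (norm w)\<^sup>2"
        using assms by (intro Vp_second_difference_le_quadratic) auto
      also have "\<dots> \<le> p * Vp (p - 2) x * (s * norm z)\<^sup>2"
        using assms Vp_pos[of "p - 2" x] by (intro mult_left_mono power_mono) auto
      also have "\<dots> = ?C1 * norm z powr 2"
        using z by (simp add: power_mult_distrib)
      finally have "?\<Delta> / norm z powr (d + \<alpha>) \<le> ?C1 * (norm z powr 2 / norm z powr (d + \<alpha>))"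
        by (simp add: divide_right_mono)
      also have "norm z powr 2 / norm z powr (d + \<alpha>) = ?G1"
        using True by (simp add: powr_diff[symmetric] algebra_simps del: powr_numeral)
      finally show ?thesis
        using G_nonneg by linarith
    next
      case False
      then have "Vp 1 x / s < norm z"
        by (simp add: \<rho>_def)
      then have "Vp 1 x \<le> s * norm z"
        using assms by (simp add: divide_less_eq mult.commute)
      then have "?\<Delta> \<le> 2 powr (p + 1) * (s * norm z) powr p"
        using assms by (intro Vp_second_difference_le_large) auto
      also have "\<dots> = ?C2 * norm z powr p"
        using assms by (simp add: powr_mult)
      finally have "?\<Delta> / norm z powr (d + \<alpha>) \<le> ?C2 * (norm z powr p / norm z powr (d + \<alpha>))"
        by (simp add: divide_right_mono)
      also have "norm z powr p / norm z powr (d + \<alpha>) = ?G2"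
        using False by (simp add: powr_diff[symmetric] algebra_simps)
      finally show ?thesis
        using G_nonneg by linarith
    qed
  qed
qed

lemma nn_integral_norm_powr_split:
  fixes a b \<rho> C1 C2 :: real
  assumes "0 < a" "0 < b" "0 < \<rho>" "0 \<le> C1" "0 \<le> C2"
  shows "(\<integral>\<^sup>+ z. ennreal (C1 * (indicator {..\<rho>} (norm z) * norm z powr (a - DIM('a)))
                     + C2 * (indicator {\<rho>..} (norm z) * norm z powr (- b - DIM('a))))
           \<partial>(lborel :: 'a::euclidean_space measure))
       = ennreal (unit_sphere_area DIM('a) * (C1 * \<rho> powr a / a + C2 * \<rho> powr (- b) / b))"
proof -
  have "(\<integral>\<^sup>+ z. ennreal (C1 * (indicator {..\<rho>} (norm z) * norm z powr (a - DIM('a)))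
                     + C2 * (indicator {\<rho>..} (norm z) * norm z powr (- b - DIM('a)))) \<partial>(lborel :: 'a measure))
    = (\<integral>\<^sup>+ z. ennreal C1 * ennreal (indicator {..\<rho>} (norm z) * norm z powr (a - DIM('a)))
                     + ennreal C2 * ennreal (indicator {\<rho>..} (norm z) * norm z powr (- b - DIM('a)))
           \<partial>(lborel :: 'a measure))"
    using assms by (intro nn_integral_cong) (simp add: ennreal_plus[symmetric] ennreal_mult[symmetric] del: ennreal_plus)
  also have "\<dots> = ennreal C1 * ennreal (unit_sphere_area DIM('a) * \<rho> powr a / a)
      + ennreal C2 * ennreal (unit_sphere_area DIM('a) * \<rho> powr (- b) / b)"
    using assms
    by (simp add: nn_integral_add nn_integral_cmult nn_integral_norm_powr_inside_ball
          nn_integral_norm_powr_outside_ball)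
  also have "\<dots> = ennreal (unit_sphere_area DIM('a) * (C1 * \<rho> powr a / a + C2 * \<rho> powr (- b) / b))"
    using assms unit_sphere_area_nonneg[of "DIM('a)"]
    by (simp add: ennreal_plus[symmetric] ennreal_mult[symmetric] algebra_simps del: ennreal_plus)
  finally show ?thesis .
qed

definition jump_const :: "real \<Rightarrow> nat \<Rightarrow> real \<Rightarrow> real" where
  "jump_const \<alpha> d p = stable_const \<alpha> d * unit_sphere_area d * (p / (2 - \<alpha>) + 2 powr (p + 1) / (\<alpha> - p))"

lemma stable_const_nonneg:
  assumes "0 < \<alpha>" "\<alpha> < 2"
  shows "0 \<le> stable_const \<alpha> d"
  unfolding stable_const_def using assms
  by (cases "d = 0") (auto intro!: divide_nonneg_pos mult_nonneg_nonneg mult_pos_pos Gamma_real_pos)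

lemma jump_const_nonneg:
  assumes "0 < \<alpha>" "\<alpha> < 2" "0 < p" "p < \<alpha>"
  shows "0 \<le> jump_const \<alpha> d p"
  unfolding jump_const_def using assms stable_const_nonneg[of \<alpha> d]
  by (intro mult_nonneg_nonneg add_nonneg_nonneg unit_sphere_area_nonneg) auto

text \<open>Below the radius \<open>Vp 1 x / s\<close>, with \<open>s\<close> the operator norm of \<open>\<sigma> x\<close>, the integrand is
  dominated by the quadratic bound, above it by the large-jump bound; at that radius both
  contributions scale like \<open>s powr \<alpha> * Vp (p - \<alpha>) x\<close>.\<close>
lemma L_sigma_Vp_le:
  fixes \<sigma> :: "real^'n \<Rightarrow> real^'n^'n"
  assumes "0 < \<alpha>" "\<alpha> < 2" "0 < p" "p < \<alpha>"
  shows "L_sigma \<alpha> \<sigma> (Vp p) x \<le> jump_const \<alpha> CARD('n) p * onorm (\<lambda>v. \<sigma> x *v v) powr \<alpha> * Vp (p - \<alpha>) x"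
proof -
  define s where "s = onorm (\<lambda>v. \<sigma> x *v v)"
  define d where "d = real CARD('n)"
  define F where "F z = (Vp p (x + \<sigma> x *v z) + Vp p (x - \<sigma> x *v z) - 2 * Vp p x) / norm z powr (d + \<alpha>)"
    for z :: "real^'n"
  have s_bound: "norm (\<sigma> x *v z) \<le> s * norm z" for z
    unfolding s_def using onorm[of "\<lambda>v. \<sigma> x *v v" z] by simp
  have L: "L_sigma \<alpha> \<sigma> (Vp p) x = stable_const \<alpha> CARD('n) * integral\<^sup>L lborel F"
    unfolding L_sigma_def F_def d_def by simp
  have "0 \<le> s"
    unfolding s_def by (intro onorm_pos_le) simp
  then consider "s = 0" | "0 < s"
    by linarith
  then show ?thesis
  proof cases
    case 1
    then have "F = (\<lambda>z. 0)"
      using s_bound by (simp add: F_def fun_eq_iff)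
    then show ?thesis
      using L 1 assms by (simp add: s_def)
  next
    case 2
    define \<rho> where "\<rho> = Vp 1 x / s"
    define C1 where "C1 = p * Vp (p - 2) x * s\<^sup>2"
    define C2 where "C2 = 2 powr (p + 1) * s powr p"
    have \<rho>: "0 < \<rho>"
      using 2 Vp_pos[of 1 x] by (simp add: \<rho>_def)
    have C: "0 \<le> C1" "0 \<le> C2"
      using assms Vp_pos[of "p - 2" x] by (simp_all add: C1_def C2_def)
    have \<rho>_powr: "\<rho> powr e = Vp e x / s powr e" for e
      using 2 Vp_pos[of 1 x] by (simp add: \<rho>_def powr_divide Vp_powr)
    have s_powr: "s powr a / s powr (a - \<alpha>) = s powr \<alpha>" for a
      by (simp add: powr_diff[symmetric])
    have "C1 * \<rho> powr (2 - \<alpha>) = p * (Vp (p - 2) x * Vp (2 - \<alpha>) x) * (s powr 2 / s powr (2 - \<alpha>))"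
      using 2 by (simp add: C1_def \<rho>_powr)
    moreover have "C2 * \<rho> powr (p - \<alpha>) = 2 powr (p + 1) * Vp (p - \<alpha>) x * (s powr p / s powr (p - \<alpha>))"
      by (simp add: C2_def \<rho>_powr)
    ultimately have "C1 * \<rho> powr (2 - \<alpha>) = p * s powr \<alpha> * Vp (p - \<alpha>) x"
      "C2 * \<rho> powr (p - \<alpha>) = 2 powr (p + 1) * s powr \<alpha> * Vp (p - \<alpha>) x"
      by (simp_all only: s_powr Vp_add[symmetric]) simp_all
    then have integral_bound: "unit_sphere_area d * (C1 * \<rho> powr (2 - \<alpha>) / (2 - \<alpha>)
        + C2 * \<rho> powr (p - \<alpha>) / (\<alpha> - p))
      = unit_sphere_area d * (p / (2 - \<alpha>) + 2 powr (p + 1) / (\<alpha> - p)) * s powr \<alpha> * Vp (p - \<alpha>) x"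
      by (simp add: field_simps)
    have "(\<integral>\<^sup>+ z. ennreal (F z) \<partial>lborel)
        \<le> (\<integral>\<^sup>+ z. ennreal (C1 * (indicator {..\<rho>} (norm z) * norm z powr ((2 - \<alpha>) - d))
             + C2 * (indicator {\<rho>..} (norm z) * norm z powr (- (\<alpha> - p) - d))) \<partial>(lborel :: (real^'n) measure))"
      unfolding F_def C1_def C2_def \<rho>_def using assms 2 s_bound
      by (intro nn_integral_mono ennreal_leI Vp_second_difference_quotient_le) auto
    also have "\<dots> = ennreal (unit_sphere_area d * (C1 * \<rho> powr (2 - \<alpha>) / (2 - \<alpha>)
        + C2 * \<rho> powr (p - \<alpha>) / (\<alpha> - p)))"
      using nn_integral_norm_powr_split[of "2 - \<alpha>" "\<alpha> - p" \<rho> C1 C2, where 'a = "real^'n"] assms \<rho> C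
      by (simp add: d_def)
    also have "\<dots> = ennreal (unit_sphere_area d * (p / (2 - \<alpha>) + 2 powr (p + 1) / (\<alpha> - p))
        * s powr \<alpha> * Vp (p - \<alpha>) x)"
      by (simp only: integral_bound)
    finally have "integral\<^sup>L lborel F
        \<le> unit_sphere_area d * (p / (2 - \<alpha>) + 2 powr (p + 1) / (\<alpha> - p)) * s powr \<alpha> * Vp (p - \<alpha>) x"
      using assms 2 Vp_pos[of "p - \<alpha>" x] unit_sphere_area_nonneg[of d]
      by (intro integral_real_bounded) (auto simp: d_def)
    then show ?thesis
      unfolding L jump_const_def s_def[symmetric] d_def[symmetric]
      using stable_const_nonneg[of \<alpha> "CARD('n)"] assms
      by (simp add: mult_left_mono mult.assoc)
  qed
qed

lemma unit_sphere_area_eq: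
  assumes "0 < n"
  shows "unit_sphere_area n = 2 * pi powr (n / 2) / Gamma (n / 2)"
proof -
  have Gamma_succ: "Gamma (n / 2 + 1) = n / 2 * Gamma (n / 2)"
    using assms by (intro Gamma_plus1) (auto dest: nonpos_Ints_nonpos)
  have "Gamma (n / 2) > 0"
    using assms by (intro Gamma_real_pos) auto
  then show ?thesis
    unfolding unit_sphere_area_def unit_ball_vol_def Gamma_succ using assms by simp
qed

lemma jump_const_le_q_const:
  assumes "0 < \<alpha>" "\<alpha> < 2" "0 < p" "p < \<alpha>" "0 < d"
  shows "jump_const \<alpha> d p * 2 powr ((2 - \<alpha>) / 2) \<le> p * q_const \<alpha> d p"
proof -
  define K where "K = pi powr (real d / 2) * Gamma ((real d + \<alpha>) / 2)
    / ((Gamma (real d / 2))\<^sup>2 * Gamma ((2 - \<alpha>) / 2))"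
  define X where "X = p / (2 - \<alpha>)"
  define Y where "Y = 1 / (\<alpha> - p)"
  define E where "E = 2 powr (3 + 2 * \<alpha>)"
  have Gamma_pos: "Gamma (real d / 2) > 0" "Gamma ((real d + \<alpha>) / 2) > 0" "Gamma ((2 - \<alpha>) / 2) > 0"
    using assms by (auto intro!: Gamma_real_pos)
  then have Gamma_nonzero: "Gamma (real d / 2) \<noteq> 0" "Gamma ((real d + \<alpha>) / 2) \<noteq> 0"
      "Gamma ((2 - \<alpha>) / 2) \<noteq> 0"
    by linarith+
  have pos: "0 < K" "0 < X" "0 < Y"
    using assms Gamma_pos Gamma_nonzero unfolding K_def X_def Y_def by (auto intro!: divide_pos_pos mult_pos_pos)
  from Gamma_pos have "jump_const \<alpha> d p = 2 * \<alpha> * K * (2 powr \<alpha> * X + 2 powr (\<alpha> + p + 1) * Y)"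
    using assms by (simp add: jump_const_def stable_const_def unit_sphere_area_eq K_def X_def Y_def
        field_simps power2_eq_square powr_add)
  then have jump: "jump_const \<alpha> d p * 2 powr ((2 - \<alpha>) / 2)
      = 2 * \<alpha> * K * (2 powr (\<alpha> + (2 - \<alpha>) / 2) * X + 2 powr (\<alpha> + p + 1 + (2 - \<alpha>) / 2) * Y)"
    by (simp add: powr_add algebra_simps)
  have "\<alpha> / (2 - \<alpha>) + \<alpha> / ((\<alpha> - p) * p) = \<alpha> / p * (X + Y)"
    using assms by (simp add: X_def Y_def field_simps)
  then have "p * q_const \<alpha> d p = \<alpha> * K * (X + Y) * 2 powr (4 + 2 * \<alpha>)"
    using assms by (simp add: q_const_def K_def)
  also have "2 powr (4 + 2 * \<alpha>) = 2 powr 1 * E"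
    unfolding E_def powr_add[symmetric] by simp
  also have "\<alpha> * K * (X + Y) * (2 powr 1 * E) = 2 * \<alpha> * K * (E * X + E * Y)"
    by (simp add: algebra_simps)
  finally have q: "p * q_const \<alpha> d p = 2 * \<alpha> * K * (E * X + E * Y)" .
  have "\<alpha> + (2 - \<alpha>) / 2 \<le> 3 + 2 * \<alpha>" "\<alpha> + p + 1 + (2 - \<alpha>) / 2 \<le> 3 + 2 * \<alpha>"
    using assms by (simp_all add: field_simps)
  then have "2 powr (\<alpha> + (2 - \<alpha>) / 2) \<le> E" "2 powr (\<alpha> + p + 1 + (2 - \<alpha>) / 2) \<le> E"
    by (simp_all add: E_def)
  then show ?thesis
    unfolding jump q using assms pos
    by (auto intro!: mult_left_mono add_mono mult_right_mono)
qed

lemma gen_L_Vp_le: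
  fixes \<sigma> :: "real^'n \<Rightarrow> real^'n^'n" and b :: "real^'n \<Rightarrow> real^'n"
  assumes "0 < \<alpha>" "\<alpha> < 2" "0 < p" "p < \<alpha>"
  shows "gen_L \<alpha> \<sigma> b (Vp p) x
    \<le> jump_const \<alpha> CARD('n) p * onorm (\<lambda>v. \<sigma> x *v v) powr \<alpha> * Vp (p - \<alpha>) x
      + p * Vp (p - 2) x * (x \<bullet> b x)"
  using L_sigma_Vp_le[OF assms, of \<sigma> x]
  by (simp add: gen_L_def frechet_derivative_at[OF Vp_has_derivative, symmetric])

lemma gen_L_Vp_le_outside_unit_ball:
  fixes \<sigma> :: "real^'n \<Rightarrow> real^'n^'n" and b :: "real^'n \<Rightarrow> real^'n"
  assumes "0 < \<alpha>" "\<alpha> < 2" "0 < p" "p < \<alpha>" "-2 \<le> r" "0 \<le> c0" "0 \<le> c1" "1 \<le> norm x"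
    and drift: "q_const \<alpha> CARD('n) p * onorm (\<lambda>v. \<sigma> x *v v) powr \<alpha> * norm x powr (2 - \<alpha>) + x \<bullet> b x
      \<le> - c0 * norm x powr (2 + r) + c1"
  shows "gen_L \<alpha> \<sigma> b (Vp p) x \<le> - (p * c0 / 2 powr ((2 + r) / 2)) * Vp (p + r) x + p * c1"
proof -
  define q where "q = q_const \<alpha> CARD('n) p"
  define J where "J = jump_const \<alpha> CARD('n) p"
  define S where "S = onorm (\<lambda>v. \<sigma> x *v v) powr \<alpha>"
  define V where "V = Vp (p - 2) x"
  have V: "0 < V" "V \<le> 1"
    using assms Vp_pos[of "p - 2" x] Vp_le_1[of "p - 2" x] by (auto simp: V_def)
  have S: "0 \<le> S"
    by (simp add: S_def)
  have J: "0 \<le> J" "J * 2 powr ((2 - \<alpha>) / 2) \<le> p * q"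
    using assms jump_const_nonneg jump_const_le_q_const[of \<alpha> p "CARD('n)"] by (simp_all add: J_def q_def)
  have "J * S * Vp (p - \<alpha>) x = J * (S * V * Vp (2 - \<alpha>) x)"
    using Vp_add[of "p - 2" "2 - \<alpha>" x] by (simp add: V_def)
  also have "\<dots> \<le> J * (S * V * (2 powr ((2 - \<alpha>) / 2) * norm x powr (2 - \<alpha>)))"
    using assms J S V Vp_le_norm_powr[of x "2 - \<alpha>"] by (intro mult_left_mono) auto
  also have "\<dots> = (J * 2 powr ((2 - \<alpha>) / 2)) * (S * V * norm x powr (2 - \<alpha>))"
    by (simp add: mult_ac)
  also have "\<dots> \<le> (p * q) * (S * V * norm x powr (2 - \<alpha>))"
    using J S V by (intro mult_right_mono) auto
  finally have jump: "J * S * Vp (p - \<alpha>) x \<le> p * V * (q * S * norm x powr (2 - \<alpha>))"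
    by (simp add: mult_ac)
  have "p * c0 / 2 powr ((2 + r) / 2) * Vp (p + r) x = p * c0 * V * (Vp (2 + r) x / 2 powr ((2 + r) / 2))"
    using Vp_add[of "p - 2" "2 + r" x] by (simp add: V_def)
  also have "\<dots> \<le> p * c0 * V * (2 powr ((2 + r) / 2) * norm x powr (2 + r) / 2 powr ((2 + r) / 2))"
    using assms V Vp_le_norm_powr[of x "2 + r"] by (intro mult_left_mono divide_right_mono) auto
  finally have confinement: "p * c0 / 2 powr ((2 + r) / 2) * Vp (p + r) x \<le> p * V * (c0 * norm x powr (2 + r))"
    by (simp add: mult_ac)
  have "p * V * (x \<bullet> b x) \<le> p * V * (- c0 * norm x powr (2 + r) + c1 - q * S * norm x powr (2 - \<alpha>))"
    using assms V drift by (intro mult_left_mono) (auto simp: q_def S_def)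
  moreover have "p * V * c1 \<le> p * c1"
    using assms V by (simp add: mult_left_le_one_le)
  ultimately show ?thesis
    using gen_L_Vp_le[of \<alpha> p \<sigma> b x] assms jump confinement
    by (simp add: J_def S_def V_def algebra_simps)
qed

lemma gen_L_Vp_bounded_above_on_compact:
  fixes \<sigma> :: "real^'n \<Rightarrow> real^'n^'n" and b :: "real^'n \<Rightarrow> real^'n"
  assumes "0 < \<alpha>" "\<alpha> < 2" "0 < p" "p < \<alpha>"
    and "locally_bounded b" "locally_bounded \<sigma>" "compact C"
  obtains M where "\<And>x. x \<in> C \<Longrightarrow> gen_L \<alpha> \<sigma> b (Vp p) x \<le> M"
proof -
  have "bounded (b ` C)" "bounded (\<sigma> ` C)" "bounded C"
    using assms(5-7) compact_imp_bounded unfolding locally_bounded_def by auto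
  then obtain B A R where B: "\<And>x. x \<in> C \<Longrightarrow> norm (b x) \<le> B"
    and A: "\<And>x. x \<in> C \<Longrightarrow> norm (\<sigma> x) \<le> A" and R: "\<And>x. x \<in> C \<Longrightarrow> norm x \<le> R"
    unfolding bounded_iff by (metis imageI)
  define S where "S = real CARD('n) * real CARD('n) * \<bar>A\<bar>"
  have "gen_L \<alpha> \<sigma> b (Vp p) x \<le> jump_const \<alpha> CARD('n) p * S powr \<alpha> + p * (\<bar>R\<bar> * \<bar>B\<bar>)"
    if x: "x \<in> C" for x
  proof -
    have "\<bar>\<sigma> x $ i $ j\<bar> \<le> \<bar>A\<bar>" for i j
      using component_le_norm_cart[of "\<sigma> x $ i" j] Finite_Cartesian_Product.norm_nth_le[of "\<sigma> x" i] A[OF x]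
      by linarith
    then have "onorm (\<lambda>v. \<sigma> x *v v) \<le> S"
      unfolding S_def by (rule onorm_le_matrix_component)
    moreover have "0 \<le> onorm (\<lambda>v. \<sigma> x *v v)"
      by (intro onorm_pos_le) simp
    ultimately have "onorm (\<lambda>v. \<sigma> x *v v) powr \<alpha> \<le> S powr \<alpha>"
      using assms by (intro powr_mono2) auto
    then have "onorm (\<lambda>v. \<sigma> x *v v) powr \<alpha> * Vp (p - \<alpha>) x \<le> S powr \<alpha> * 1"
      using assms Vp_pos[of "p - \<alpha>" x] Vp_le_1[of "p - \<alpha>" x] by (intro mult_mono) auto
    then have jump: "jump_const \<alpha> CARD('n) p * onorm (\<lambda>v. \<sigma> x *v v) powr \<alpha> * Vp (p - \<alpha>) x
        \<le> jump_const \<alpha> CARD('n) p * S powr \<alpha>"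
      using assms jump_const_nonneg[of \<alpha> p "CARD('n)"] by (simp add: mult.assoc mult_left_mono)
    have "Vp (p - 2) x * (x \<bullet> b x) \<le> Vp (p - 2) x * \<bar>x \<bullet> b x\<bar>"
      using Vp_pos[of "p - 2" x] by (intro mult_left_mono) auto
    also have "\<dots> \<le> \<bar>x \<bullet> b x\<bar>"
      using assms Vp_pos[of "p - 2" x] Vp_le_1[of "p - 2" x] by (intro mult_left_le_one_le) auto
    also have "\<dots> \<le> norm x * norm (b x)"
      by (rule Cauchy_Schwarz_ineq2)
    also have "\<dots> \<le> \<bar>R\<bar> * \<bar>B\<bar>"
      using R[OF x] B[OF x] by (intro mult_mono) auto
    finally have "p * Vp (p - 2) x * (x \<bullet> b x) \<le> p * (\<bar>R\<bar> * \<bar>B\<bar>)"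
      using assms by (simp add: mult.assoc mult_left_mono)
    then show ?thesis
      using gen_L_Vp_le[of \<alpha> p \<sigma> b x] assms jump by linarith
  qed
  then show ?thesis
    using that by blast
qed

theorem lemma3p1:
  fixes \<alpha> r p c0 c1 :: real
    and b :: "real ^ 'n \<Rightarrow> real ^ 'n"
    and \<sigma> :: "real ^ 'n \<Rightarrow> real ^ 'n ^ 'n"
  assumes "0 < \<alpha>" "\<alpha> < 2"
    and "r > - \<alpha>"
    and "max (- r) 0 < p" "p < \<alpha>"
    and "locally_bounded b" "locally_bounded \<sigma>"
    and "c0 > 0" "c1 > 0"
    and "\<forall>x :: real ^ 'n. norm x > 1 \<longrightarrow>
           q_const \<alpha> CARD('n) p * onorm (\<lambda>v. \<sigma> x *v v) powr \<alpha> * norm x powr (2 - \<alpha>) + x \<bullet> b x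
             \<le> - c0 * norm x powr (2 + r) + c1"
  shows "\<exists>\<kappa>0 \<kappa>1 :: real. \<kappa>0 > 0 \<and> \<kappa>1 > 0 \<and>
           (\<forall>x :: real ^ 'n. gen_L \<alpha> \<sigma> b (Vp p) x \<le> - \<kappa>0 * Vp p x powr (1 + r / p) + \<kappa>1)"
proof -
  have p: "0 < p" "0 < p + r"
    using assms(4) by auto
  obtain M where M: "\<And>x. x \<in> cball 0 1 \<Longrightarrow> gen_L \<alpha> \<sigma> b (Vp p) x \<le> M"
    using gen_L_Vp_bounded_above_on_compact[of \<alpha> p b \<sigma> "cball 0 1"] assms p by auto
  define \<kappa>0 where "\<kappa>0 = p * c0 / 2 powr ((2 + r) / 2)"
  define \<kappa>1 where "\<kappa>1 = p * c1 + \<bar>M\<bar> + \<kappa>0 * 2 powr ((p + r) / 2)"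
  have \<kappa>: "0 < \<kappa>0" "0 < \<kappa>1"
    using assms p by (simp_all add: \<kappa>0_def \<kappa>1_def add_pos_nonneg)
  have "gen_L \<alpha> \<sigma> b (Vp p) x \<le> - \<kappa>0 * Vp (p + r) x + \<kappa>1" for x :: "real^'n"
  proof (cases "norm x \<le> 1")
    case True
    then have "\<kappa>0 * Vp (p + r) x \<le> \<kappa>0 * 2 powr ((p + r) / 2)"
      using \<kappa> p Vp_le_on_unit_ball[of x "p + r"] by (intro mult_left_mono) auto
    moreover have "0 < p * c1"
      using assms p by simp
    ultimately show ?thesis
      using M[of x] True abs_ge_self[of M] unfolding \<kappa>1_def by (simp add: dist_norm)
  next
    case False
    then have "gen_L \<alpha> \<sigma> b (Vp p) x \<le> - \<kappa>0 * Vp (p + r) x + p * c1"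
      using gen_L_Vp_le_outside_unit_ball[of \<alpha> p r c0 c1 x \<sigma> b] assms p by (simp add: \<kappa>0_def)
    moreover have "0 \<le> \<kappa>0 * 2 powr ((p + r) / 2)"
      using \<kappa> by simp
    ultimately show ?thesis
      unfolding \<kappa>1_def by linarith
  qed
  moreover have "Vp p x powr (1 + r / p) = Vp (p + r) x" for x :: "real^'n"
    using p by (simp add: Vp_powr distrib_left)
  ultimately show ?thesis
    using \<kappa> by auto
qed

end
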